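(* Let $r\geq 3$ be odd and let $2<m<n$ be integers. Put $$S=1+\sum_{k=1}^{(r-1)/2} n(m-1)^{k}(n-1)^{k-1}=1+n(m-1)+n(m-1)^2(n-1)+\cdots+n(m-1)^{\frac{r-1}{2}}(n-1)^{\frac{r-3}{2}},$$ and let $x$ be the smallest non-negative integer such that $(S+x)\cdot n$ is divisible by $m$. Then every $(m,n;2r)$-bipartite biregular cage has at least $(S+x)\left(1+\frac{n}{m}\right)$ vertices.
   Context: For integers $a,b\geq 2$ and even $g\ge 4$, an $(a,b;g)$-bipartite biregular graph is a finite simple bipartite graph of girth exactly $g$ in which all vertices of one bipartition class have degree $a$ and all vertices of the other class have degree $b$. An $(a,b;g)$-bipartite biregular cage is such a graph of minimum possible order. *)

theory Defs
  imports Complex_Main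
begin

definition simple_graph :: "nat set \<Rightarrow> (nat \<Rightarrow> nat \<Rightarrow> bool) \<Rightarrow> bool" where
  "simple_graph V E \<longleftrightarrow> finite V \<and> (\<forall>u v. E u v \<longrightarrow> E v u) \<and> (\<forall>v. \<not> E v v)
     \<and> (\<forall>u v. E u v \<longrightarrow> u \<in> V \<and> v \<in> V)"

definition degree :: "nat set \<Rightarrow> (nat \<Rightarrow> nat \<Rightarrow> bool) \<Rightarrow> nat \<Rightarrow> nat" where
  "degree V E v = card {u \<in> V. E v u}"

definition is_cycle :: "nat set \<Rightarrow> (nat \<Rightarrow> nat \<Rightarrow> bool) \<Rightarrow> nat list \<Rightarrow> bool" where
  "is_cycle V E cs \<longleftrightarrow> length cs \<ge> 3 \<and> distinct cs \<and> set cs \<subseteq> V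
     \<and> (\<forall>i. Suc i < length cs \<longrightarrow> E (cs ! i) (cs ! Suc i))
     \<and> E (last cs) (hd cs)"

definition has_girth :: "nat set \<Rightarrow> (nat \<Rightarrow> nat \<Rightarrow> bool) \<Rightarrow> nat \<Rightarrow> bool" where
  "has_girth V E g \<longleftrightarrow> (\<exists>cs. is_cycle V E cs \<and> length cs = g)
     \<and> (\<forall>cs. is_cycle V E cs \<longrightarrow> length cs \<ge> g)"

definition bipartite_biregular ::
  "nat set \<Rightarrow> (nat \<Rightarrow> nat \<Rightarrow> bool) \<Rightarrow> nat \<Rightarrow> nat \<Rightarrow> nat \<Rightarrow> bool" where
  "bipartite_biregular V E a b g \<longleftrightarrow> simple_graph V E \<and> has_girth V E g \<and>
     (\<exists>A B. A \<union> B = V \<and> A \<inter> B = {} \<and>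
        (\<forall>u v. E u v \<longrightarrow> (u \<in> A \<and> v \<in> B) \<or> (u \<in> B \<and> v \<in> A)) \<and>
        (\<forall>v\<in>A. degree V E v = a) \<and> (\<forall>v\<in>B. degree V E v = b))"

text \<open>A cage: a bipartite biregular graph of minimum order (any finite graph is
isomorphic to one on natural-number vertices, so comparing within nat loses nothing).\<close>

definition bb_cage :: "nat set \<Rightarrow> (nat \<Rightarrow> nat \<Rightarrow> bool) \<Rightarrow> nat \<Rightarrow> nat \<Rightarrow> nat \<Rightarrow> bool" where
  "bb_cage V E a b g \<longleftrightarrow> bipartite_biregular V E a b g \<and>
     (\<forall>V' E'. bipartite_biregular V' E' a b g \<longrightarrow> card V \<le> card V')"

end

theory Submission
  imports Defs
begin

text \<open>Fix a vertex v in the class B of degree n. Non-backtracking walks from v of even length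
2k < r end in B, and for k \<ge> 1 there are n (m-1)^k (n-1)^(k-1) of them. Two distinct such walks
with the same end glue to a closed non-backtracking walk of length < 2r, which contains a cycle
shorter than the girth; so their ends are distinct and |B| \<ge> S. Counting edges gives
|A| m = |B| n, hence m divides (S + (|B| - S)) n and |B| \<ge> S + x by minimality of x; finally
|V| = |B| (1 + n/m).\<close>

fun nonbacktracking :: "'a list \<Rightarrow> bool" where
  "nonbacktracking (x # y # z # zs) \<longleftrightarrow> x \<noteq> z \<and> nonbacktracking (y # z # zs)"
| "nonbacktracking _ \<longleftrightarrow> True"

lemma nonbacktracking_Cons_Cons:
  "nonbacktracking (x # y # zs) \<longleftrightarrow> (zs = [] \<or> x \<noteq> hd zs) \<and> nonbacktracking (y # zs)"
  by (cases zs) auto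

lemma nonbacktracking_ConsD: "nonbacktracking (x # xs) \<Longrightarrow> nonbacktracking xs"
  by (cases "x # xs" rule: nonbacktracking.cases) auto

lemma nonbacktracking_nth:
  "nonbacktracking xs \<Longrightarrow> i + 2 < length xs \<Longrightarrow> xs ! i \<noteq> xs ! (i + 2)"
  by (induction xs arbitrary: i rule: nonbacktracking.induct) (auto simp: nth_Cons split: nat.split)

lemma nonbacktracking_rev_append:
  assumes "nonbacktracking (x # xs)" "nonbacktracking (x # ys)"
    and "xs = [] \<or> ys = [] \<or> hd xs \<noteq> hd ys"
  shows "nonbacktracking (rev xs @ x # ys)"
  using assms
proof (induction xs arbitrary: x ys)
  case (Cons a xs)
  have "nonbacktracking (rev xs @ a # x # ys)"
  proof (rule Cons.IH)
    show "nonbacktracking (a # xs)" using Cons.prems(1) by (rule nonbacktracking_ConsD)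
    show "nonbacktracking (a # x # ys)" using Cons.prems by (auto simp: nonbacktracking_Cons_Cons)
    show "xs = [] \<or> x # ys = [] \<or> hd xs \<noteq> hd (x # ys)"
      using Cons.prems(1) by (auto simp: nonbacktracking_Cons_Cons)
  qed
  then show ?case by simp
qed simp

lemma closed_nb_walk_contains_cycle:
  assumes sg: "simple_graph V E" and walk: "successively E ws" and nb: "nonbacktracking ws"
    and len: "2 \<le> length ws" and closed: "hd ws = last ws"
  shows "\<exists>cs. is_cycle V E cs \<and> length cs < length ws"
proof -
  \<comment> \<open>the segment between two closest equal entries is a cycle\<close>
  define repeats where "repeats d \<longleftrightarrow> 0 < d \<and> (\<exists>i. i + d < length ws \<and> ws ! i = ws ! (i + d))"
    for d
  have "ws \<noteq> []" using len by auto
  then have "repeats (length ws - 1)"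
    using len closed unfolding repeats_def
    by (intro conjI exI[of _ 0]) (auto simp: hd_conv_nth last_conv_nth)
  then have "repeats (LEAST d. repeats d)" by (rule LeastI)
  then obtain d i where d: "d = (LEAST d. repeats d)" and "0 < d"
    and i: "i + d < length ws" "ws ! i = ws ! (i + d)"
    unfolding repeats_def by blast
  have d_min: "\<not> repeats d'" if "d' < d" for d'
    using that d not_less_Least by blast
  have edge: "E (ws ! j) (ws ! Suc j)" if "Suc j < length ws" for j
    using walk that by (rule successively_nth)
  have irrefl: "\<not> E u u" for u
    using sg by (simp add: simple_graph_def)
  have "d \<noteq> 1" using edge[of i] i irrefl by auto
  moreover have "d \<noteq> 2" using nonbacktracking_nth[OF nb, of i] i by auto
  ultimately have "3 \<le> d" using \<open>0 < d\<close> by linarith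
  define cs where "cs = take d (drop i ws)"
  have len_cs: "length cs = d" and cs_nth: "\<And>k. k < d \<Longrightarrow> cs ! k = ws ! (i + k)"
    using i by (auto simp: cs_def)
  have "distinct cs"
    unfolding distinct_conv_nth
  proof (intro allI impI notI)
    fix a b assume "a < length cs" "b < length cs" "a \<noteq> b" "cs ! a = cs ! b"
    then have "repeats (max a b - min a b)"
      using i len_cs cs_nth unfolding repeats_def
      by (intro conjI exI[of _ "i + min a b"]) (auto simp: max_def min_def)
    moreover have "max a b - min a b < d"
      using \<open>a < length cs\<close> \<open>b < length cs\<close> len_cs by linarith
    ultimately show False using d_min by blast
  qed
  moreover have "\<forall>k. Suc k < length cs \<longrightarrow> E (cs ! k) (cs ! Suc k)"
    using edge i len_cs cs_nth by auto
  moreover have "E (last cs) (hd cs)"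
  proof -
    have "cs \<noteq> []" using len_cs \<open>0 < d\<close> by auto
    then have "last cs = cs ! (d - 1)" "hd cs = cs ! 0"
      using len_cs by (simp_all add: last_conv_nth hd_conv_nth)
    moreover have "Suc (i + (d - 1)) = i + d" using \<open>0 < d\<close> by simp
    ultimately have "last cs = ws ! (i + (d - 1))" "hd cs = ws ! Suc (i + (d - 1))"
      using cs_nth \<open>0 < d\<close> i(2) by auto
    then show ?thesis using edge[of "i + (d - 1)"] i \<open>0 < d\<close> by simp
  qed
  moreover have "set cs \<subseteq> V"
  proof
    fix u assume "u \<in> set cs"
    then obtain k where "k < d" "u = ws ! (i + k)" using len_cs cs_nth by (metis in_set_conv_nth)
    then show "u \<in> V" using edge[of "i + k"] i sg by (auto simp: simple_graph_def)
  qed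
  ultimately have "is_cycle V E cs"
    using \<open>3 \<le> d\<close> len_cs by (simp add: is_cycle_def)
  moreover have "length cs < length ws" using i len_cs by simp
  ultimately show ?thesis by blast
qed

lemma short_nb_walks_eq:
  assumes sg: "simple_graph V E" and girth: "\<forall>cs. is_cycle V E cs \<longrightarrow> g \<le> length cs"
    and "successively E xs" "successively E ys" "nonbacktracking xs" "nonbacktracking ys"
    and "xs \<noteq> []" "ys \<noteq> []" "hd xs = hd ys" "last xs = last ys"
    and "length xs + length ys \<le> g + 1"
  shows "xs = ys"
  using assms(3-)
proof (induction xs arbitrary: ys)
  case (Cons x xs)
  then obtain ys' where ys: "ys = x # ys'" by (cases ys) auto
  have sym: "\<And>u w. E u w \<Longrightarrow> E w u" using sg by (simp add: simple_graph_def)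
  show ?case
  proof (cases "xs \<noteq> [] \<and> ys' \<noteq> [] \<and> hd xs = hd ys'")
    case True
    then have "xs = ys'"
      using Cons.prems ys
      by (intro Cons.IH) (auto simp: successively_Cons dest: nonbacktracking_ConsD)
    then show ?thesis using ys by simp
  next
    case False
    show ?thesis
    proof (rule ccontr)
      assume "x # xs \<noteq> ys"
      with False ys have fork: "xs = [] \<or> ys' = [] \<or> hd xs \<noteq> hd ys'" and "xs @ ys' \<noteq> []"
        by auto
      define ws where "ws = rev xs @ x # ys'"
      have "successively (\<lambda>u w. E w u) xs"
        using Cons.prems(1) sym by (auto simp: successively_Cons intro: successively_mono)
      then have "successively E ws"
        using Cons.prems ys sym by (auto simp: ws_def successively_append_iff successively_Cons last_rev)
      moreover have "nonbacktracking ws"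
        unfolding ws_def using Cons.prems(3,4) ys fork by (intro nonbacktracking_rev_append) simp_all
      moreover have "hd ws = last ws"
        using Cons.prems(8) ys by (cases "xs = []") (auto simp: ws_def hd_append hd_rev)
      moreover have "2 \<le> length ws" using \<open>xs @ ys' \<noteq> []\<close> by (simp add: ws_def Suc_le_eq)
      ultimately obtain cs where "is_cycle V E cs" "length cs < length ws"
        using closed_nb_walk_contains_cycle[OF sg] by blast
      moreover have "length ws \<le> g" using Cons.prems(9) ys by (simp add: ws_def)
      ultimately show False using girth by fastforce
    qed
  qed
qed simp

text \<open>Walks are vertex lists with the newest vertex first: \<^term>\<open>nb_walks E v l\<close> holds the
non-backtracking walks of length l that start at v, read backwards.\<close>

definition nb_walks :: "('a \<Rightarrow> 'a \<Rightarrow> bool) \<Rightarrow> 'a \<Rightarrow> nat \<Rightarrow> 'a list set" where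
  "nb_walks E v l =
     {xs. length xs = Suc l \<and> last xs = v \<and> successively E xs \<and> nonbacktracking xs}"

definition nb_extensions :: "nat set \<Rightarrow> (nat \<Rightarrow> nat \<Rightarrow> bool) \<Rightarrow> nat list \<Rightarrow> nat set" where
  "nb_extensions V E xs = {u \<in> V. E (hd xs) u \<and> (tl xs = [] \<or> u \<noteq> hd (tl xs))}"

lemma length_nb_walks: "xs \<in> nb_walks E v l \<Longrightarrow> length xs = Suc l"
  by (simp add: nb_walks_def)

lemma nb_walks_0: "nb_walks E v 0 = {[v]}"
  by (auto simp: nb_walks_def length_Suc_conv)

lemma nb_walks_Suc:
  assumes "simple_graph V E"
  shows "nb_walks E v (Suc l) = (\<lambda>(xs, u). u # xs) ` (SIGMA xs:nb_walks E v l. nb_extensions V E xs)"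
proof -
  have sym: "\<And>u w. E u w \<Longrightarrow> E w u" and inV: "\<And>u w. E u w \<Longrightarrow> u \<in> V \<and> w \<in> V"
    using assms by (simp_all add: simple_graph_def)
  have step: "u # xs \<in> nb_walks E v (Suc l) \<longleftrightarrow> xs \<in> nb_walks E v l \<and> u \<in> nb_extensions V E xs"
    if ne: "xs \<noteq> []" for u xs
  proof -
    obtain a t where xs: "xs = a # t" using ne by (cases xs) auto
    show ?thesis
      unfolding xs nb_walks_def nb_extensions_def
      by (simp add: nonbacktracking_Cons_Cons successively_Cons) (metis sym inV)
  qed
  show ?thesis
  proof (intro equalityI subsetI)
    fix ys assume ys: "ys \<in> nb_walks E v (Suc l)"
    then obtain u xs where "ys = u # xs" "xs \<noteq> []"
      by (auto simp: nb_walks_def length_Suc_conv)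
    with ys step show "ys \<in> (\<lambda>(xs, u). u # xs) ` (SIGMA xs:nb_walks E v l. nb_extensions V E xs)"
      by (auto intro!: image_eqI[of _ _ "(xs, u)"])
  next
    fix ys assume "ys \<in> (\<lambda>(xs, u). u # xs) ` (SIGMA xs:nb_walks E v l. nb_extensions V E xs)"
    then obtain xs u where "ys = u # xs" "xs \<in> nb_walks E v l" "u \<in> nb_extensions V E xs"
      by auto
    moreover have "xs \<noteq> []" using length_nb_walks[OF \<open>xs \<in> nb_walks E v l\<close>] by auto
    ultimately show "ys \<in> nb_walks E v (Suc l)" using step by simp
  qed
qed

lemma finite_nb_walks: "simple_graph V E \<Longrightarrow> finite (nb_walks E v l)"
proof (induction l)
  case (Suc l)
  then have "finite (nb_extensions V E xs)" for xs
    by (simp add: nb_extensions_def simple_graph_def)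
  with Suc show ?case by (simp add: nb_walks_Suc)
qed (simp add: nb_walks_0)

lemma card_nb_walks_Suc_eq_sum:
  assumes "simple_graph V E"
  shows "card (nb_walks E v (Suc l)) = (\<Sum>xs\<in>nb_walks E v l. card (nb_extensions V E xs))"
proof -
  have "inj_on (\<lambda>(xs, u). u # xs) (SIGMA xs:nb_walks E v l. nb_extensions V E xs)"
    by (auto simp: inj_on_def)
  moreover have "finite (nb_extensions V E xs)" for xs
    using assms by (simp add: nb_extensions_def simple_graph_def)
  ultimately show ?thesis
    using assms by (simp add: nb_walks_Suc card_image finite_nb_walks)
qed

lemma inj_on_hd_nb_walks:
  assumes sg: "simple_graph V E" and girth: "\<forall>cs. is_cycle V E cs \<longrightarrow> g \<le> length cs"
    and "2 * L < g"
  shows "inj_on hd (\<Union>l\<le>L. nb_walks E v l)"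
proof (rule inj_onI)
  fix xs ys assume "xs \<in> (\<Union>l\<le>L. nb_walks E v l)" "ys \<in> (\<Union>l\<le>L. nb_walks E v l)" "hd xs = hd ys"
  then obtain i j where "i \<le> L" "j \<le> L" "xs \<in> nb_walks E v i" "ys \<in> nb_walks E v j"
    by blast
  with \<open>2 * L < g\<close> \<open>hd xs = hd ys\<close> show "xs = ys"
    by (intro short_nb_walks_eq[OF sg girth]) (auto simp: nb_walks_def)
qed

locale bipartite_biregular_graph =
  fixes V :: "nat set" and E :: "nat \<Rightarrow> nat \<Rightarrow> bool" and A B :: "nat set" and m n :: nat
  assumes simple: "simple_graph V E"
    and partition: "A \<union> B = V" "A \<inter> B = {}"
    and edges_across: "\<And>u w. E u w \<Longrightarrow> (u \<in> A \<and> w \<in> B) \<or> (u \<in> B \<and> w \<in> A)"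
    and degree_A: "\<And>u. u \<in> A \<Longrightarrow> degree V E u = m"
    and degree_B: "\<And>u. u \<in> B \<Longrightarrow> degree V E u = n"

lemma bipartite_biregularE:
  assumes "bipartite_biregular V E m n g"
  obtains A B where "bipartite_biregular_graph V E A B m n"
  using assms unfolding bipartite_biregular_def bipartite_biregular_graph_def by blast

context bipartite_biregular_graph
begin

lemma edge_sym: "E u w \<Longrightarrow> E w u"
  using simple by (simp add: simple_graph_def)

lemma finite_A: "finite A" and finite_B: "finite B"
  using simple partition(1) by (auto simp: simple_graph_def)

lemma card_A_mult: "card A * m = card B * n"
proof -
  have "card {b \<in> B. E a b} = m" if "a \<in> A" for a
  proof -
    have "{b \<in> B. E a b} = {u \<in> V. E a u}"
      using that partition edges_across by blast
    then show ?thesis using degree_A[OF that] by (simp add: degree_def)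
  qed
  moreover have "card {a \<in> A. E a b} = n" if "b \<in> B" for b
  proof -
    have "{a \<in> A. E a b} = {u \<in> V. E b u}"
      using that partition edges_across edge_sym by blast
    then show ?thesis using degree_B[OF that] by (simp add: degree_def)
  qed
  ultimately show ?thesis
    using sum_multicount[OF finite_A finite_B, of E n] by (simp add: mult.commute)
qed

lemma card_V: "0 < m \<Longrightarrow> real (card V) = real (card B) * (1 + real n / real m)"
proof -
  assume "0 < m"
  have "card V = card A + card B"
    using partition finite_A finite_B by (metis card_Un_disjoint)
  moreover have "real (card A) = real (card B) * real n / real m"
    using card_A_mult \<open>0 < m\<close> by (simp add: field_simps flip: of_nat_mult)
  ultimately show ?thesis by (simp add: field_simps)
qed

lemma hd_nb_walks:
  assumes "v \<in> B" "xs \<in> nb_walks E v l"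
  shows "hd xs \<in> (if even l then B else A)"
  using assms(2)
proof (induction l arbitrary: xs)
  case 0
  then show ?case using \<open>v \<in> B\<close> by (simp add: nb_walks_0)
next
  case (Suc l)
  then obtain ys u where "xs = u # ys" "ys \<in> nb_walks E v l" "E (hd ys) u"
    by (auto simp: nb_walks_Suc[OF simple] nb_extensions_def)
  with Suc.IH partition(2) edges_across show ?case by (cases "even l") auto
qed

lemma card_nb_extensions:
  assumes "v \<in> B" "xs \<in> nb_walks E v l"
  shows "card (nb_extensions V E xs) = (if l = 0 then n else if even l then n - 1 else m - 1)"
proof (cases l)
  case 0
  then show ?thesis
    using assms degree_B by (simp add: nb_walks_0 nb_extensions_def degree_def)
next
  case (Suc k)
  then obtain a b t where xs: "xs = a # b # t" and "E a b"
    using assms(2) by (auto simp: nb_walks_def length_Suc_conv)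
  then have "nb_extensions V E xs = {u \<in> V. E a u} - {b}" and "b \<in> {u \<in> V. E a u}"
    using simple by (auto simp: nb_extensions_def simple_graph_def)
  then have "card (nb_extensions V E xs) = degree V E a - 1"
    by (simp add: degree_def)
  moreover have "a \<in> (if even l then B else A)"
    using hd_nb_walks[OF assms] xs by simp
  ultimately show ?thesis
    using Suc degree_A degree_B by (cases "even l") auto
qed

lemma card_nb_walks_Suc:
  assumes "v \<in> B"
  shows "card (nb_walks E v (Suc l)) =
    card (nb_walks E v l) * (if l = 0 then n else if even l then n - 1 else m - 1)"
  using card_nb_extensions[OF assms] by (simp add: card_nb_walks_Suc_eq_sum[OF simple])

lemma card_nb_walks_even:
  assumes "v \<in> B"
  shows "card (nb_walks E v (2 * Suc k)) = n * (m - 1) ^ Suc k * (n - 1) ^ k"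
proof (induction k)
  case 0
  have "card (nb_walks E v (Suc 0)) = n"
    using card_nb_walks_Suc[OF assms, of 0] by (simp add: nb_walks_0)
  then show ?case
    using card_nb_walks_Suc[OF assms, of "Suc 0"] by (simp add: numeral_2_eq_2)
next
  case (Suc k)
  have "card (nb_walks E v (2 * Suc (Suc k))) = card (nb_walks E v (Suc (2 * Suc k))) * (m - 1)"
    using card_nb_walks_Suc[OF assms, of "Suc (2 * Suc k)"] by simp
  also have "\<dots> = card (nb_walks E v (2 * Suc k)) * (n - 1) * (m - 1)"
    using card_nb_walks_Suc[OF assms, of "2 * Suc k"] by simp
  also have "\<dots> = n * (m - 1) ^ Suc (Suc k) * (n - 1) ^ Suc k"
    using Suc.IH by (simp add: ac_simps)
  finally show ?case .
qed

lemma card_B_lower_bound: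
  assumes "v \<in> B" and girth: "\<forall>cs. is_cycle V E cs \<longrightarrow> g \<le> length cs" and "4 * K < g"
  shows "1 + (\<Sum>k = 1..K. n * (m - 1) ^ k * (n - 1) ^ (k - 1)) \<le> card B"
proof -
  let ?W = "\<Union>k\<le>K. nb_walks E v (2 * k)"
  have "inj_on hd (\<Union>l\<le>2 * K. nb_walks E v l)"
    using \<open>4 * K < g\<close> by (intro inj_on_hd_nb_walks[OF simple girth]) simp
  then have "inj_on hd ?W"
    by (rule inj_on_subset) force
  moreover have "hd ` ?W \<subseteq> B"
    using hd_nb_walks[OF \<open>v \<in> B\<close>] by fastforce
  ultimately have "card ?W \<le> card B"
    using finite_B by (metis card_image card_mono)
  moreover have "card ?W = (\<Sum>k\<le>K. card (nb_walks E v (2 * k)))"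
    by (rule card_UN_disjoint) (auto simp: finite_nb_walks[OF simple] dest!: length_nb_walks)
  moreover have "(\<Sum>k\<le>K. card (nb_walks E v (2 * k))) =
      1 + (\<Sum>k = 1..K. n * (m - 1) ^ k * (n - 1) ^ (k - 1))"
    by (simp add: sum.atMost_shift sum.atLeast1_atMost_eq nb_walks_0
        card_nb_walks_even[OF \<open>v \<in> B\<close>, simplified])
  ultimately show ?thesis by simp
qed

end

theorem mainTheorem3:
  fixes r m n :: nat and V :: "nat set" and E :: "nat \<Rightarrow> nat \<Rightarrow> bool"
  assumes "r \<ge> 3" and "odd r" and "2 < m" and "m < n"
    and "bb_cage V E m n (2 * r)"
  shows "let S = 1 + (\<Sum>k = 1..(r - 1) div 2. n * (m - 1) ^ k * (n - 1) ^ (k - 1));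
             x = (LEAST x::nat. m dvd (S + x) * n)
         in real (card V) \<ge> real (S + x) * (1 + real n / real m)"
proof -
  define S where "S = 1 + (\<Sum>k = 1..(r - 1) div 2. n * (m - 1) ^ k * (n - 1) ^ (k - 1))"
  define x where "x = (LEAST x::nat. m dvd (S + x) * n)"
  have bb: "bipartite_biregular V E m n (2 * r)"
    using assms(5) by (simp add: bb_cage_def)
  then obtain A B where G: "bipartite_biregular_graph V E A B m n"
    by (rule bipartite_biregularE)
  from bb obtain cs where girth: "\<forall>cs. is_cycle V E cs \<longrightarrow> 2 * r \<le> length cs"
    and "is_cycle V E cs"
    by (auto simp: bipartite_biregular_def has_girth_def)
  then obtain v where "v \<in> B"
    using bipartite_biregular_graph.edges_across[OF G] by (metis is_cycle_def)
  have "4 * ((r - 1) div 2) < 2 * r"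
    using \<open>odd r\<close> by (auto elim: oddE)
  then have "S \<le> card B"
    unfolding S_def by (rule bipartite_biregular_graph.card_B_lower_bound[OF G \<open>v \<in> B\<close> girth])
  moreover have "m dvd (S + (card B - S)) * n"
    using \<open>S \<le> card B\<close> bipartite_biregular_graph.card_A_mult[OF G]
    by (metis dvd_triv_right le_add_diff_inverse)
  then have "x \<le> card B - S"
    unfolding x_def by (rule Least_le)
  ultimately have "real (S + x) \<le> real (card B)" by simp
  then show ?thesis
    using bipartite_biregular_graph.card_V[OF G] \<open>2 < m\<close>
    unfolding Let_def S_def[symmetric] x_def[symmetric] by (simp add: mult_right_mono)
qed

end
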